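(* Let $K^-$ be the graph obtained from the complete graph $K_4$ on vertices $v_1,v_2,v_3,v_4$ by deleting the edge $v_1v_2$. Let $c$ be any $(4,1)$-coloring of $K^-$, and let $D_c(K^-)$ be the associated digraph. All differences of colors below are taken in $\mathbb{Z}_4$. (a) If $c(v_1)=c(v_2)$, then $D_c(K^-)$ is acyclic and has no directed path between $v_1$ and $v_2$ (in either direction). (b) If $c(v_1)-c(v_2)=1$, then $D_c(K^-)$ is acyclic and has a directed path from $v_1$ to $v_2$. (c) If $c(v_1)-c(v_2)=2$, then $D_c(K^-)$ contains a directed cycle.
   Context: For positive integers $p,q$, a $(p,q)$-coloring of a graph $G$ is a map $c:V(G)\to\{0,1,\dots,p-1\}$ such that for every edge $xy\in E(G)$ one has $q\le |c(x)-c(y)|\le p-q$. A $(4,1)$-coloring is thus an ordinary proper coloring with colors $\{0,1,2,3\}$. For a $(p,q)$-coloring $c$ of $G$, $D_c(G)$ is the digraph with vertex set $V(G)$ which, for each edge $xy$ of $G$, contains the arc $(x,y)$ whenever $c(y)-c(x)\equiv q \pmod p$. *)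

theory Defs
  imports Main
begin

definition pq_coloring :: "nat \<Rightarrow> nat \<Rightarrow> 'a set \<Rightarrow> 'a set set \<Rightarrow> ('a \<Rightarrow> nat) \<Rightarrow> bool" where
  "pq_coloring p q V E c \<longleftrightarrow>
     (\<forall>v\<in>V. c v < p) \<and>
     (\<forall>x y. {x, y} \<in> E \<longrightarrow>
        int q \<le> \<bar>int (c x) - int (c y)\<bar> \<and> \<bar>int (c x) - int (c y)\<bar> \<le> int p - int q)"

definition Dc_arcs :: "nat \<Rightarrow> nat \<Rightarrow> 'a set set \<Rightarrow> ('a \<Rightarrow> nat) \<Rightarrow> ('a \<times> 'a) set" where
  "Dc_arcs p q E c = {(x, y). {x, y} \<in> E \<and> (int (c y) - int (c x)) mod int p = int q mod int p}"

definition Kminus_V :: "nat set" where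
  "Kminus_V = {1, 2, 3, 4}"

definition Kminus_E :: "nat set set" where
  "Kminus_E = {{i, j} | i j. i \<in> Kminus_V \<and> j \<in> Kminus_V \<and> i \<noteq> j} - {{1, 2}}"

end

theory Submission
  imports Defs
begin

text \<open>In \<open>D\<^sub>c\<close> the colour increases by one (mod 4) along every arc. Counting colours
cyclically from a base colour \<open>b\<close>, the offset therefore increases strictly along every arc that
does not end at colour \<open>b\<close>, and acyclicity follows once no arc ends there. If
\<open>c(v\<^sub>1) = c(v\<^sub>2)\<close>, some colour \<open>b\<close> is unused and \<open>v\<^sub>1\<close>, \<open>v\<^sub>2\<close> have the same offset,
so neither reaches the other. If \<open>c(v\<^sub>1) - c(v\<^sub>2) = 1\<close>, take \<open>b = c(v\<^sub>1)\<close>: an arc ending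
at \<open>v\<^sub>1\<close> would have to start at \<open>v\<^sub>2\<close>, which is not adjacent. In cases (b) and (c) the
vertices \<open>v\<^sub>3\<close>, \<open>v\<^sub>4\<close> carry the two remaining colours, which yields the path
\<open>v\<^sub>1 \<rightarrow> v \<rightarrow> v' \<rightarrow> v\<^sub>2\<close> and the cycle \<open>v\<^sub>2 \<rightarrow> v \<rightarrow> v\<^sub>1 \<rightarrow> v' \<rightarrow> v\<^sub>2\<close> respectively.\<close>

lemma trancl_less_if_less_on_arcs:
  fixes f :: "'a \<Rightarrow> 'b :: order"
  assumes "\<And>x y. (x, y) \<in> R \<Longrightarrow> f x < f y" and "(x, y) \<in> R\<^sup>+"
  shows "f x < f y"
  using assms(2) by induction (auto dest: assms(1) intro: less_trans)

lemma acyclic_if_less_on_arcs: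
  fixes f :: "'a \<Rightarrow> 'b :: order"
  assumes "\<And>x y. (x, y) \<in> R \<Longrightarrow> f x < f y"
  shows "acyclic R"
  unfolding acyclic_def using trancl_less_if_less_on_arcs[of R f] assms by blast

lemma mod_diff_less_if_mod_diff_eq:
  fixes x y b p q :: int
  assumes step: "(y - x) mod p = q mod p" and "0 < q" and "q \<le> (y - b) mod p"
  shows "(x - b) mod p < (y - b) mod p"
proof (cases "p = 0")
  case True
  then show ?thesis using assms by simp
next
  case False
  then have "0 < p"
    using assms(2,3) neg_mod_sign[of p "y - b"] by linarith
  then have "q < p"
    using assms(3) pos_mod_bound[of p "y - b"] by linarith
  have "(x - b) mod p = ((y - b) mod p - (y - x) mod p) mod p"
    by (simp add: mod_diff_eq)
  also have "\<dots> = ((y - b) mod p - q) mod p"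
    using step \<open>0 < q\<close> \<open>q < p\<close> by simp
  also have "\<dots> = (y - b) mod p - q"
    using assms(2,3) \<open>0 < p\<close> pos_mod_bound[of p "y - b"]
    by (intro mod_pos_pos_trivial) linarith+
  finally show ?thesis using assms(2) by simp
qed

lemma Dc_arcs_shifted_colour_less:
  assumes "(x, y) \<in> Dc_arcs p q E c" and "0 < q" and "int q \<le> (int (c y) - b) mod int p"
  shows "(int (c x) - b) mod int p < (int (c y) - b) mod int p"
  using assms unfolding Dc_arcs_def by (auto intro: mod_diff_less_if_mod_diff_eq)

lemma mod_diff_right_eq_iff:
  fixes a a' m n :: int
  shows "(a - m) mod n = (a' - m) mod n \<longleftrightarrow> a mod n = a' mod n"
  by (simp add: mod_eq_dvd_iff)

lemma pq_coloring_adjacent_neq: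
  assumes "pq_coloring p q V E c" and "0 < q" and "{x, y} \<in> E"
  shows "c x \<noteq> c y"
  using assms unfolding pq_coloring_def by fastforce

lemma Kminus_E_iff:
  "{x, y} \<in> Kminus_E \<longleftrightarrow> x \<in> Kminus_V \<and> y \<in> Kminus_V \<and> x \<noteq> y \<and> {x, y} \<noteq> {1, 2}"
  unfolding Kminus_E_def by (auto simp: doubleton_eq_iff)

locale Kminus_coloring =
  fixes c :: "nat \<Rightarrow> nat"
  assumes coloring: "pq_coloring 4 1 Kminus_V Kminus_E c"
begin

abbreviation D :: "(nat \<times> nat) set" where
  "D \<equiv> Dc_arcs 4 1 Kminus_E c"

lemma colour_less: "v \<in> Kminus_V \<Longrightarrow> c v < 4"
  using coloring unfolding pq_coloring_def by simp

lemma colours_distinct: "c 1 \<noteq> c 3" "c 1 \<noteq> c 4" "c 2 \<noteq> c 3" "c 2 \<noteq> c 4" "c 3 \<noteq> c 4"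
  by (rule pq_coloring_adjacent_neq[OF coloring];
      simp add: Kminus_E_iff Kminus_V_def doubleton_eq_iff)+

definition offset :: "nat \<Rightarrow> nat \<Rightarrow> int" where
  "offset b v = (int (c v) - int b) mod 4"

lemma offset_range: "offset b v \<in> {0, 1, 2, 3}"
proof -
  have "0 \<le> offset b v" "offset b v < 4"
    unfolding offset_def by simp_all
  then show ?thesis by auto
qed

lemma offset_eq_iff:
  assumes "v \<in> Kminus_V" "w \<in> Kminus_V"
  shows "offset b v = offset b w \<longleftrightarrow> c v = c w"
  using colour_less[OF assms(1)] colour_less[OF assms(2)]
  unfolding offset_def mod_diff_right_eq_iff by simp

lemma offset_eq_0_iff:
  assumes "v \<in> Kminus_V" "b < 4"
  shows "offset b v = 0 \<longleftrightarrow> c v = b"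
proof -
  have "offset b v = 0 \<longleftrightarrow> (int (c v) - int b) mod 4 = (int b - int b) mod 4"
    unfolding offset_def by simp
  then show ?thesis
    using colour_less[OF assms(1)] assms(2) unfolding mod_diff_right_eq_iff by simp
qed

lemma arc_iff_offset:
  "(x, y) \<in> D \<longleftrightarrow> {x, y} \<in> Kminus_E \<and> (offset b y - offset b x) mod 4 = 1"
  unfolding Dc_arcs_def offset_def by (simp add: mod_diff_eq)

lemma offset_less_on_arcs:
  assumes "(x, y) \<in> D" "offset b y \<noteq> 0"
  shows "offset b x < offset b y"
  using Dc_arcs_shifted_colour_less[OF assms(1), of "int b"] assms(2) offset_range[of b y]
  unfolding offset_def by auto

lemma inner_vertex_offsets:
  "offset b 3 \<in> {0, 1, 2, 3} - {offset b 1, offset b 2}"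
  "offset b 4 \<in> {0, 1, 2, 3} - {offset b 1, offset b 2}"
  "offset b 3 \<noteq> offset b 4"
  using offset_range colours_distinct by (simp_all add: offset_eq_iff Kminus_V_def)

lemma arc_in_V: "(x, y) \<in> D \<Longrightarrow> x \<in> Kminus_V \<and> y \<in> Kminus_V"
  unfolding arc_iff_offset[of _ _ 0] Kminus_E_iff by simp

lemma acyclic_and_no_path_if_equal_end_colours:
  assumes "c 1 = c 2"
  shows "acyclic D \<and> (1, 2) \<notin> D\<^sup>+ \<and> (2, 1) \<notin> D\<^sup>+"
proof -
  have "c ` Kminus_V = c ` {1, 3, 4}"
    using assms by (auto simp: Kminus_V_def)
  then have "card (c ` Kminus_V) < card {0..<4::nat}"
    using card_image_le[of "{1, 3, 4}" c] by simp
  moreover have "finite (c ` Kminus_V)"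
    by (simp add: Kminus_V_def)
  ultimately have "\<not> {0..<4} \<subseteq> c ` Kminus_V"
    by (meson card_mono leD)
  then obtain m where "m < 4" and unused: "m \<notin> c ` Kminus_V"
    by (auto simp: subset_iff)
  have increasing: "offset m x < offset m y" if "(x, y) \<in> D" for x y
  proof (rule offset_less_on_arcs[OF that])
    have "y \<in> Kminus_V"
      using arc_in_V[OF that] by simp
    with unused have "c y \<noteq> m"
      by auto
    then show "offset m y \<noteq> 0"
      using offset_eq_0_iff[OF \<open>y \<in> Kminus_V\<close> \<open>m < 4\<close>] by simp
  qed
  have "offset m 1 = offset m 2"
    using assms unfolding offset_def by simp
  then have "(1, 2) \<notin> D\<^sup>+" "(2, 1) \<notin> D\<^sup>+"
    using trancl_less_if_less_on_arcs[where R = D and f = "offset m", OF increasing]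
    by (metis less_irrefl)+
  with acyclic_if_less_on_arcs[where R = D and f = "offset m", OF increasing] show ?thesis
    by simp
qed

lemma acyclic_and_path_if_end_colours_differ_by_one:
  assumes "(int (c 1) - int (c 2)) mod 4 = 1"
  shows "acyclic D \<and> (1, 2) \<in> D\<^sup>+"
proof -
  let ?f = "offset (c 1)"
  have f1: "?f 1 = 0"
    unfolding offset_def by simp
  have f2: "?f 2 = 3"
  proof -
    have "?f 2 = (- ((int (c 1) - int (c 2)) mod 4)) mod 4"
      unfolding offset_def by (simp add: mod_minus_eq)
    then show ?thesis
      using assms by simp
  qed
  have inner: "?f 3 = 1 \<and> ?f 4 = 2 \<or> ?f 3 = 2 \<and> ?f 4 = 1"
    using inner_vertex_offsets[of "c 1"] f1 f2 by auto
  then obtain w w' where ww': "(w, w') = (3, 4) \<or> (w, w') = (4, 3)" "?f w = 1" "?f w' = 2"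
    by auto
  have "(1, w) \<in> D" "(w, w') \<in> D" "(w', 2) \<in> D"
    unfolding arc_iff_offset[of _ _ "c 1"] using ww' f1 f2
    by (auto simp: Kminus_E_iff Kminus_V_def)
  then have "(1, 2) \<in> D\<^sup>+"
    by (meson trancl.simps)
  moreover have "?f x < ?f y" if "(x, y) \<in> D" for x y
  proof (rule offset_less_on_arcs[OF that])
    show "?f y \<noteq> 0"
    proof
      assume "?f y = 0"
      then have "y = 1"
        using f1 f2 inner_vertex_offsets[of "c 1"] arc_in_V[OF that] by (auto simp: Kminus_V_def)
      then have "x = 3 \<or> x = 4" "(?f y - ?f x) mod 4 = 1"
        using that unfolding arc_iff_offset[of _ _ "c 1"] by (auto simp: Kminus_E_iff Kminus_V_def)
      then show False
        using \<open>?f y = 0\<close> inner by auto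
    qed
  qed
  then have "acyclic D"
    by (rule acyclic_if_less_on_arcs)
  ultimately show ?thesis
    by simp
qed

lemma not_acyclic_if_end_colours_differ_by_two:
  assumes "(int (c 1) - int (c 2)) mod 4 = 2"
  shows "\<not> acyclic D"
proof -
  let ?f = "offset (c 2)"
  have f1: "?f 1 = 2" and f2: "?f 2 = 0"
    using assms unfolding offset_def by simp_all
  have "?f 3 = 1 \<and> ?f 4 = 3 \<or> ?f 3 = 3 \<and> ?f 4 = 1"
    using inner_vertex_offsets[of "c 2"] f1 f2 by auto
  then obtain w w' where ww': "(w, w') = (3, 4) \<or> (w, w') = (4, 3)" "?f w = 1" "?f w' = 3"
    by auto
  have "(2, w) \<in> D" "(w, 1) \<in> D" "(1, w') \<in> D" "(w', 2) \<in> D"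
    unfolding arc_iff_offset[of _ _ "c 2"] using ww' f1 f2
    by (auto simp: Kminus_E_iff Kminus_V_def)
  then have "(2, 2) \<in> D\<^sup>+"
    by (meson trancl.simps)
  then show ?thesis
    unfolding acyclic_def by blast
qed

end

theorem lemma1:
  fixes c :: "nat \<Rightarrow> nat"
  assumes "pq_coloring 4 1 Kminus_V Kminus_E c"
  shows "(c 1 = c 2 \<longrightarrow>
            acyclic (Dc_arcs 4 1 Kminus_E c) \<and>
            (1, 2) \<notin> (Dc_arcs 4 1 Kminus_E c)\<^sup>+ \<and> (2, 1) \<notin> (Dc_arcs 4 1 Kminus_E c)\<^sup>+)
       \<and> ((int (c 1) - int (c 2)) mod 4 = 1 \<longrightarrow>
            acyclic (Dc_arcs 4 1 Kminus_E c) \<and> (1, 2) \<in> (Dc_arcs 4 1 Kminus_E c)\<^sup>+)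
       \<and> ((int (c 1) - int (c 2)) mod 4 = 2 \<longrightarrow>
            \<not> acyclic (Dc_arcs 4 1 Kminus_E c))"
proof -
  interpret Kminus_coloring c
    using assms by unfold_locales
  show ?thesis
    using acyclic_and_no_path_if_equal_end_colours
      acyclic_and_path_if_end_colours_differ_by_one
      not_acyclic_if_end_colours_differ_by_two
    by blast
qed

end
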